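(* Let $(X,T)$ be a compact Hausdorff flow. Then $(X,T)$ satisfies the Furstenberg condition if and only if $(X,T)$ is equicontinuous. Moreover, if these equivalent conditions hold, then every point of $X$ is almost automorphic.
   Context: $X$ is a compact Hausdorff space and $T$ a topological group acting continuously on the left of $X$ (a compact Hausdorff flow). $\mathcal U$ denotes the unique uniform structure of $X$, i.e. the set of neighborhoods of the diagonal in $X\times X$ (entourages). The flow is equicontinuous if for every $\alpha\in\mathcal U$ there is $\beta\in\mathcal U$ such that $(x,y)\in\beta$ implies $(tx,ty)\in\alpha$ for all $t\in T$. The flow satisfies the Furstenberg condition if for every $\alpha\in\mathcal U$ there exists $\beta\in\mathcal U$ such that whenever $(tx,x)\in\beta$ and $(y,x)\in\beta$ for some $x,y\in X$, $t\in T$, we have $(ty,x)\in\alpha$. A point $x\in X$ is almost automorphic if for every net $\{t_i\}\subset T$ with $t_ix\to y$ for some $y\in X$ it holds that $t_i^{-1}y\to x$. *)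

theory Defs
  imports Complex_Main
begin

definition flow :: "('g::topological_group_add \<Rightarrow> 'a::topological_space \<Rightarrow> 'a) \<Rightarrow> bool" where
  "flow act \<longleftrightarrow>
     (\<forall>x. act 0 x = x) \<and>
     (\<forall>s t x. act (s + t) x = act s (act t x)) \<and>
     continuous_on UNIV (\<lambda>p. act (fst p) (snd p))"

text \<open>Entourages of the (unique) uniformity of a compact Hausdorff space:
  neighbourhoods of the diagonal in X \<times> X.\<close>
definition entourage :: "('a::topological_space \<times> 'a) set \<Rightarrow> bool" where
  "entourage \<alpha> \<longleftrightarrow> (\<exists>U. open U \<and> range (\<lambda>x. (x, x)) \<subseteq> U \<and> U \<subseteq> \<alpha>)"

definition flow_equicontinuous :: "('g::topological_group_add \<Rightarrow> 'a::topological_space \<Rightarrow> 'a) \<Rightarrow> bool" where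
  "flow_equicontinuous act \<longleftrightarrow>
     (\<forall>\<alpha>. entourage \<alpha> \<longrightarrow> (\<exists>\<beta>. entourage \<beta> \<and>
        (\<forall>x y. (x, y) \<in> \<beta> \<longrightarrow> (\<forall>t. (act t x, act t y) \<in> \<alpha>))))"

definition furstenberg_condition :: "('g::topological_group_add \<Rightarrow> 'a::topological_space \<Rightarrow> 'a) \<Rightarrow> bool" where
  "furstenberg_condition act \<longleftrightarrow>
     (\<forall>\<alpha>. entourage \<alpha> \<longrightarrow> (\<exists>\<beta>. entourage \<beta> \<and>
        (\<forall>x y t. (act t x, x) \<in> \<beta> \<and> (y, x) \<in> \<beta> \<longrightarrow> (act t y, x) \<in> \<alpha>)))"

text \<open>Nets in the group are represented by filters on
  the group (a net t_i corresponds to its image filter, and conversely every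
  filter is the image filter of a net), so "for every net t_i with t_i x \<rightarrow> y,
  t_i^{-1} y \<rightarrow> x" becomes the statement below.\<close>
definition almost_automorphic :: "('g::topological_group_add \<Rightarrow> 'a::topological_space \<Rightarrow> 'a) \<Rightarrow> 'a \<Rightarrow> bool" where
  "almost_automorphic act x \<longleftrightarrow>
     (\<forall>(F::'g filter) y. ((\<lambda>t. act t x) \<longlongrightarrow> y) F \<longrightarrow> ((\<lambda>t. act (- t) y) \<longlongrightarrow> x) F)"

end

theory Submission
  imports Defs "HOL-Analysis.Analysis"
begin

(* The only uniform-space fact needed is that in a compact Hausdorff space
   every open neighbourhood U of the diagonal has a symmetric open "half" W
   with W o W \<subseteq> U; it follows from regularity and a finite subcover.
   - Equicontinuity implies the Furstenberg condition: if (tx,x) and (y,x) are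
     close, equicontinuity makes (ty,tx) close, and the triangle inequality
     finishes.
   - Conversely, cover X by finitely many boxes G_p x G_p inside a small
     entourage B.  For each box that the orbit of z visits, fix one visiting
     time; continuity at these finitely many times gives a neighbourhood V of
     z, and the Furstenberg condition (applied at the base point of the visit)
     shows that t y stays close to t z for all y in V and all t.  Gluing these
     neighbourhoods yields uniform equicontinuity.
   - Equicontinuity implies almost automorphy: apply equicontinuity to the
     entourage (S x S) \<union> (-{x} x -{x}) for an open S around x. *)

lemma open_entourage:
  assumes "open U" and "range (\<lambda>x. (x, x)) \<subseteq> U"
  shows "entourage U"
  using assms unfolding entourage_def by blast

lemma Hausdorff_space_t2: "Hausdorff_space (euclidean :: 'a::t2_space topology)"
  unfolding Hausdorff_space_def by (auto simp: separation_t2 disjnt_def)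

lemma compact_t2_shrink:
  fixes N :: "'a::t2_space set"
  assumes "compact (UNIV :: 'a set)" and "open N" and "p \<in> N"
  shows "\<exists>M. open M \<and> p \<in> M \<and> closure M \<subseteq> N"
proof -
  have "regular_space (euclidean :: 'a topology)"
    using assms(1) by (intro compact_Hausdorff_imp_regular_space Hausdorff_space_t2)
      (simp add: compact_space_def)
  moreover have "closedin euclidean (- N)" "p \<in> topspace euclidean - (- N)"
    using assms(2,3) by auto
  ultimately obtain M V where "open M" "open V" "p \<in> M" "- N \<subseteq> V" "disjnt M V"
    unfolding regular_space_def by (metis open_openin)
  moreover have "closure M \<subseteq> - V"
    using calculation by (intro closure_minimal) (auto simp: disjnt_def)
  ultimately show ?thesis by blast
qed

lemma diagonal_box:
  assumes "open (U :: ('a::topological_space \<times> 'a) set)" and "(p, p) \<in> U"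
  shows "\<exists>G. open G \<and> p \<in> G \<and> G \<times> G \<subseteq> U"
proof -
  obtain A B where "open A" "open B" "(p, p) \<in> A \<times> B" "A \<times> B \<subseteq> U"
    using open_prod_elim[OF assms] by blast
  then show ?thesis by (intro exI[of _ "A \<inter> B"]) auto
qed

text \<open>Choose squares
  N p \<times> N p \<subseteq> U and shrunken neighbourhoods M p of p with closure in N p,
  finitely many M p covering X; W relates x and y if for each of them both
  points lie in N p or both avoid the closure of M p.\<close>
lemma diagonal_half:
  fixes U :: "('a::t2_space \<times> 'a) set"
  assumes cpt: "compact (UNIV :: 'a set)" and "open U" and "range (\<lambda>x. (x, x)) \<subseteq> U"
  shows "\<exists>W. open W \<and> range (\<lambda>x. (x, x)) \<subseteq> W \<and> (\<forall>x y. (x, y) \<in> W \<longrightarrow> (y, x) \<in> W)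
           \<and> (\<forall>x y z. (x, y) \<in> W \<and> (y, z) \<in> W \<longrightarrow> (x, z) \<in> U)"
proof -
  have "\<forall>p. \<exists>G. open G \<and> p \<in> G \<and> G \<times> G \<subseteq> U"
    using diagonal_box[OF assms(2)] assms(3) by blast
  then obtain N where N: "\<And>p. open (N p) \<and> p \<in> N p \<and> N p \<times> N p \<subseteq> U"
    by metis
  have "\<forall>p. \<exists>M. open M \<and> p \<in> M \<and> closure M \<subseteq> N p"
    using compact_t2_shrink[OF cpt] N by blast
  then obtain M where M: "\<And>p. open (M p) \<and> p \<in> M p \<and> closure (M p) \<subseteq> N p"
    by metis
  obtain P where "finite P" and cover: "UNIV \<subseteq> (\<Union>p\<in>P. M p)"
    using M by (metis compactE_image[OF cpt, of UNIV M] UNIV_I UN_I subsetI)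
  define W where "W = (\<Inter>p\<in>P. (N p \<times> N p) \<union> ((- closure (M p)) \<times> (- closure (M p))))"
  have "open W"
    unfolding W_def using \<open>finite P\<close> N M
    by (intro open_INT ballI open_Un open_Times open_Compl) auto
  moreover have "range (\<lambda>x. (x, x)) \<subseteq> W"
    unfolding W_def using N M by blast
  moreover have "\<forall>x y. (x, y) \<in> W \<longrightarrow> (y, x) \<in> W"
    unfolding W_def by blast
  moreover have "(x, z) \<in> U" if "(x, y) \<in> W" "(y, z) \<in> W" for x y z
  proof -
    obtain p where "p \<in> P" "y \<in> M p" using cover by blast
    then have "y \<in> closure (M p)" using closure_subset by blast
    then have "x \<in> N p" "z \<in> N p"
      using that \<open>p \<in> P\<close> unfolding W_def by blast+
    then show ?thesis using N by blast
  qed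
  ultimately show ?thesis by (intro exI[of _ W]) blast
qed

lemma flow_continuous:
  assumes "flow act"
  shows "continuous_on UNIV (act t)"
proof -
  have "continuous_on UNIV (\<lambda>p. act (fst p) (snd p))"
    using assms unfolding flow_def by blast
  then have "continuous_on UNIV (\<lambda>y. (\<lambda>p. act (fst p) (snd p)) (t, y))"
    by (rule continuous_on_compose2) (auto intro!: continuous_intros)
  then show ?thesis by simp
qed

lemma flow_shift:
  assumes "flow act"
  shows "act (s + - t) (act t y) = act s y"
proof -
  have "act (s + - t) (act t y) = act s (act (- t) (act t y))"
    using assms unfolding flow_def by metis
  also have "act (- t) (act t y) = act (- t + t) y"
    using assms unfolding flow_def by metis
  also have "\<dots> = y"
    using assms unfolding flow_def by simp
  finally show ?thesis .
qed

lemma flow_inverse: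
  assumes "flow act"
  shows "act (- t) (act t y) = y"
  using flow_shift[OF assms, of 0 t y] assms unfolding flow_def by simp

lemma equicontinuous_imp_furstenberg:
  fixes act :: "'g::topological_group_add \<Rightarrow> 'a::t2_space \<Rightarrow> 'a"
  assumes cpt: "compact (UNIV :: 'a set)" and equi: "flow_equicontinuous act"
  shows "furstenberg_condition act"
  unfolding furstenberg_condition_def
proof (intro allI impI)
  fix \<alpha> :: "('a \<times> 'a) set"
  assume "entourage \<alpha>"
  then obtain U where U: "open U" "range (\<lambda>x. (x, x)) \<subseteq> U" "U \<subseteq> \<alpha>"
    unfolding entourage_def by blast
  obtain W where W: "open W" "range (\<lambda>x. (x, x)) \<subseteq> W"
    and W_half: "\<forall>x y z. (x, y) \<in> W \<and> (y, z) \<in> W \<longrightarrow> (x, z) \<in> U"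
    using diagonal_half[OF cpt U(1,2)] by blast
  obtain \<beta> where "entourage \<beta>" and \<beta>: "\<forall>x y. (x, y) \<in> \<beta> \<longrightarrow> (\<forall>t. (act t x, act t y) \<in> W)"
    using equi open_entourage[OF W] unfolding flow_equicontinuous_def by blast
  then obtain V where V: "open V" "range (\<lambda>x. (x, x)) \<subseteq> V" "V \<subseteq> \<beta>"
    unfolding entourage_def by blast
  show "\<exists>\<beta>. entourage \<beta> \<and> (\<forall>x y t. (act t x, x) \<in> \<beta> \<and> (y, x) \<in> \<beta> \<longrightarrow> (act t y, x) \<in> \<alpha>)"
  proof (intro exI[of _ "V \<inter> W"] conjI allI impI)
    show "entourage (V \<inter> W)"
      using V W by (intro open_entourage) auto
    fix x y t
    assume close: "(act t x, x) \<in> V \<inter> W \<and> (y, x) \<in> V \<inter> W"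
    then have "(act t y, act t x) \<in> W" using \<beta> V by blast
    then show "(act t y, x) \<in> \<alpha>" using close W_half U by blast
  qed
qed

text \<open>If t x \<rightarrow> y and S is an open neighbourhood of x, equicontinuity
  for the entourage (S \<times> S) \<union> (-{x} \<times> -{x}) shows that eventually (-t) y and
  (-t)(t x) = x lie in this entourage, i.e. (-t) y \<in> S.\<close>
lemma equicontinuous_imp_almost_automorphic:
  fixes act :: "'g::topological_group_add \<Rightarrow> 'a::t2_space \<Rightarrow> 'a"
  assumes flow: "flow act" and equi: "flow_equicontinuous act"
  shows "almost_automorphic act x"
  unfolding almost_automorphic_def
proof (intro allI impI)
  fix F :: "'g filter" and y
  assume lim: "((\<lambda>t. act t x) \<longlongrightarrow> y) F"
  show "((\<lambda>t. act (- t) y) \<longlongrightarrow> x) F"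
  proof (rule topological_tendstoI)
    fix S
    assume S: "open S" "x \<in> S"
    define U where "U = (S \<times> S) \<union> ((- {x}) \<times> (- {x}))"
    have "entourage U"
      unfolding U_def using S by (intro open_entourage open_Un open_Times open_Compl) auto
    then obtain \<beta> where "entourage \<beta>" and \<beta>: "\<forall>a b. (a, b) \<in> \<beta> \<longrightarrow> (\<forall>t. (act t a, act t b) \<in> U)"
      using equi unfolding flow_equicontinuous_def by blast
    then obtain V where V: "open V" "range (\<lambda>x. (x, x)) \<subseteq> V" "V \<subseteq> \<beta>"
      unfolding entourage_def by blast
    have "open (Pair y -` V)"
      using V(1) by (rule open_vimage) (auto intro!: continuous_intros)
    moreover have "y \<in> Pair y -` V" using V(2) by auto
    ultimately have "eventually (\<lambda>t. act t x \<in> Pair y -` V) F"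
      using topological_tendstoD[OF lim] by blast
    then show "eventually (\<lambda>t. act (- t) y \<in> S) F"
    proof (rule eventually_mono)
      fix t
      assume "act t x \<in> Pair y -` V"
      then have "(act (- t) y, act (- t) (act t x)) \<in> U" using V \<beta> by blast
      then show "act (- t) y \<in> S" unfolding U_def flow_inverse[OF flow] by auto
    qed
  qed
qed

lemma furstenberg_imp_equicontinuous_at:
  fixes act :: "'g::topological_group_add \<Rightarrow> 'a::t2_space \<Rightarrow> 'a"
  assumes cpt: "compact (UNIV :: 'a set)" and flow: "flow act"
    and "open B" and diag: "range (\<lambda>x. (x, x)) \<subseteq> B" and "B \<subseteq> W'"
    and W'_half: "\<forall>x y z. (x, y) \<in> W' \<and> (y, z) \<in> W' \<longrightarrow> (x, z) \<in> W"
    and furst: "\<forall>x y t. (act t x, x) \<in> B \<and> (y, x) \<in> B \<longrightarrow> (act t y, x) \<in> W'"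
  shows "\<exists>V. open V \<and> z \<in> V \<and> (\<forall>y\<in>V. \<forall>t. (act t y, act t z) \<in> W)"
proof -
  have "\<forall>p. \<exists>G. open G \<and> p \<in> G \<and> G \<times> G \<subseteq> B"
    using diagonal_box[OF \<open>open B\<close>] diag by blast
  then obtain G where G: "\<And>p. open (G p) \<and> p \<in> G p \<and> G p \<times> G p \<subseteq> B" by metis
  obtain P where "finite P" and cover: "UNIV \<subseteq> (\<Union>p\<in>P. G p)"
    using G by (metis compactE_image[OF cpt, of UNIV G] UNIV_I UN_I subsetI)
  define Q where "Q = {p \<in> P. \<exists>t. act t z \<in> G p}"
  have "\<forall>p. \<exists>t. p \<in> Q \<longrightarrow> act t z \<in> G p"
    unfolding Q_def by blast
  then obtain visit where visit: "\<And>p. p \<in> Q \<Longrightarrow> act (visit p) z \<in> G p"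
    by metis
  define V where "V = (\<Inter>p\<in>Q. (\<lambda>y. (act (visit p) y, act (visit p) z)) -` B)"
  have "open V"
    unfolding V_def using \<open>finite P\<close> \<open>open B\<close>
    by (intro open_INT ballI open_vimage)
      (auto simp: Q_def intro!: continuous_intros flow_continuous[OF flow])
  moreover have "z \<in> V" unfolding V_def using diag by auto
  moreover have "(act t y, act t z) \<in> W" if "y \<in> V" for y t
  proof -
    obtain p where "p \<in> P" "act t z \<in> G p" using cover by blast
    then have "p \<in> Q" unfolding Q_def by blast
    define x0 where "x0 = act (visit p) z"
    have "(act (t + - visit p) x0, x0) \<in> B" "(x0, act t z) \<in> B"
      using visit[OF \<open>p \<in> Q\<close>] \<open>act t z \<in> G p\<close> G
      unfolding x0_def flow_shift[OF flow] by blast+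
    moreover have "(act (visit p) y, x0) \<in> B"
      using \<open>y \<in> V\<close> \<open>p \<in> Q\<close> unfolding V_def x0_def by blast
    ultimately have "(act (t + - visit p) (act (visit p) y), x0) \<in> W'"
      using furst by blast
    then have "(act t y, x0) \<in> W'"
      unfolding flow_shift[OF flow] .
    moreover have "(x0, act t z) \<in> W'"
      using \<open>(x0, act t z) \<in> B\<close> \<open>B \<subseteq> W'\<close> by blast
    ultimately show ?thesis using W'_half by blast
  qed
  ultimately show ?thesis by (intro exI[of _ V]) blast
qed

lemma furstenberg_imp_equicontinuous:
  fixes act :: "'g::topological_group_add \<Rightarrow> 'a::t2_space \<Rightarrow> 'a"
  assumes cpt: "compact (UNIV :: 'a set)" and flow: "flow act"
    and furst: "furstenberg_condition act"
  shows "flow_equicontinuous act"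
  unfolding flow_equicontinuous_def
proof (intro allI impI)
  fix \<alpha> :: "('a \<times> 'a) set"
  assume "entourage \<alpha>"
  then obtain U where U: "open U" "range (\<lambda>x. (x, x)) \<subseteq> U" "U \<subseteq> \<alpha>"
    unfolding entourage_def by blast
  obtain W where W: "open W" "range (\<lambda>x. (x, x)) \<subseteq> W"
    and W_sym: "\<forall>x y. (x, y) \<in> W \<longrightarrow> (y, x) \<in> W"
    and W_half: "\<forall>x y z. (x, y) \<in> W \<and> (y, z) \<in> W \<longrightarrow> (x, z) \<in> U"
    using diagonal_half[OF cpt U(1,2)] by blast
  obtain W' where W': "open W'" "range (\<lambda>x. (x, x)) \<subseteq> W'"
    and W'_half: "\<forall>x y z. (x, y) \<in> W' \<and> (y, z) \<in> W' \<longrightarrow> (x, z) \<in> W"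
    using diagonal_half[OF cpt W(1,2)] by blast
  obtain \<beta> where "entourage \<beta>"
    and \<beta>: "\<forall>x y t. (act t x, x) \<in> \<beta> \<and> (y, x) \<in> \<beta> \<longrightarrow> (act t y, x) \<in> W'"
    using furst open_entourage[OF W'] unfolding furstenberg_condition_def by blast
  then obtain V where V: "open V" "range (\<lambda>x. (x, x)) \<subseteq> V" "V \<subseteq> \<beta>"
    unfolding entourage_def by blast
  have local_furst: "\<forall>x y t. (act t x, x) \<in> V \<inter> W' \<and> (y, x) \<in> V \<inter> W' \<longrightarrow> (act t y, x) \<in> W'"
    using \<beta> V(3) by blast
  have "\<forall>z. \<exists>Q. open Q \<and> z \<in> Q \<and> (\<forall>y\<in>Q. \<forall>t. (act t y, act t z) \<in> W)"
  proof
    fix z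
    show "\<exists>Q. open Q \<and> z \<in> Q \<and> (\<forall>y\<in>Q. \<forall>t. (act t y, act t z) \<in> W)"
      by (rule furstenberg_imp_equicontinuous_at[OF cpt flow _ _ _ W'_half local_furst])
        (use V W' in auto)
  qed
  then obtain Q where Q: "\<And>z. open (Q z) \<and> z \<in> Q z \<and> (\<forall>y\<in>Q z. \<forall>t. (act t y, act t z) \<in> W)"
    by metis
  txt \<open>Two points sharing a neighbourhood Q z stay W-close to the orbit of z,
    hence U-close to each other.\<close>
  show "\<exists>\<beta>. entourage \<beta> \<and> (\<forall>x y. (x, y) \<in> \<beta> \<longrightarrow> (\<forall>t. (act t x, act t y) \<in> \<alpha>))"
  proof (intro exI[of _ "\<Union>z. Q z \<times> Q z"] conjI allI impI)
    show "entourage (\<Union>z. Q z \<times> Q z)"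
      using Q by (intro open_entourage open_UN ballI open_Times) blast+
    fix x y t
    assume "(x, y) \<in> (\<Union>z. Q z \<times> Q z)"
    then obtain z where "x \<in> Q z" "y \<in> Q z" by blast
    then have "(act t x, act t z) \<in> W" "(act t z, act t y) \<in> W" using Q W_sym by blast+
    then show "(act t x, act t y) \<in> \<alpha>" using W_half U by blast
  qed
qed

theorem mainTheorem1:
  fixes act :: "'g::topological_group_add \<Rightarrow> 'a::t2_space \<Rightarrow> 'a"
  assumes "compact (UNIV :: 'a set)"
    and "flow act"
  shows "(furstenberg_condition act \<longleftrightarrow> flow_equicontinuous act) \<and>
         (flow_equicontinuous act \<longrightarrow> (\<forall>x. almost_automorphic act x))"
  using equicontinuous_imp_furstenberg[OF assms(1)] furstenberg_imp_equicontinuous[OF assms]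
    equicontinuous_imp_almost_automorphic[OF assms(2)]
  by blast

end
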